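(* Let $A$ be a Banach lattice algebra with identity $e$ and let $p\in BP(A)$. The following are equivalent: (i) $p\in OI(A)$; (ii) $p^2=p$; (iii) $p\in A_e$; (iv) there exists $\lambda>\|p\|$ such that $(\lambda e+p)^{-1}\ge 0$.
   Context: A Banach lattice algebra is a real Banach lattice $A$ with an associative bilinear product making $(A,\cdot)$ a Banach algebra such that $xy\ge0$ whenever $x,y\ge 0$. It has identity $e$ if $e$ is a multiplicative identity with $\|e\|=1$ (such $e$ is automatically positive). $A_e=\{x\in A: |x|\le\lambda e\text{ for some }\lambda\ge0\}$ is the order ideal generated by $e$. $L_a(x)=ax$, $R_a(x)=xa$. A band projection on a Banach lattice $X$ is an operator $P$ with $P^2=P$, $0\le P\le I_X$. $BP(A)=\{a\in A_+: L_aR_a\colon A\to A \text{ is a band projection}\}$. $OI(A)=\{p\in A: p^2=p,\ 0\le p\le e\}$ (order idempotents). For $\lambda>\|p\|$, $\lambda e+p$ is invertible. *)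

theory Defs
  imports Complex_Main
begin

text \<open>A Banach lattice algebra with identity is modelled as a type of sort
  real_normed_algebra_1 (associative bilinear product, submultiplicative norm,
  identity 1 with norm 1), banach (complete), ordered_real_vector and lattice
  (a vector lattice, i.e. Riesz space, with the same order), subject to the
  Banach lattice norm condition and positivity of products.\<close>


definition lat_abs :: "'a::{lattice, ab_group_add} \<Rightarrow> 'a" where
  "lat_abs x = sup x (- x)"

definition banach_lattice_algebra ::
  "'a::{real_normed_algebra_1, banach, ordered_real_vector, lattice} itself \<Rightarrow> bool" where
  "banach_lattice_algebra (T :: 'a itself) \<longleftrightarrow>
     (\<forall>x y :: 'a. lat_abs x \<le> lat_abs y \<longrightarrow> norm x \<le> norm y) \<and>
     (\<forall>x y :: 'a. 0 \<le> x \<longrightarrow> 0 \<le> y \<longrightarrow> 0 \<le> x * y)"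

definition band_projection ::
  "('a::{ordered_real_vector, lattice} \<Rightarrow> 'a) \<Rightarrow> bool" where
  "band_projection P \<longleftrightarrow> linear P \<and> P \<circ> P = P \<and>
     (\<forall>x. 0 \<le> x \<longrightarrow> 0 \<le> P x \<and> P x \<le> x)"

definition BP :: "'a::{real_normed_algebra_1, banach, ordered_real_vector, lattice} set" where
  "BP = {a. 0 \<le> a \<and> band_projection (\<lambda>x. a * x * a)}"

definition OI :: "'a::{real_normed_algebra_1, banach, ordered_real_vector, lattice} set" where
  "OI = {p. p * p = p \<and> 0 \<le> p \<and> p \<le> 1}"

definition ideal_e :: "'a::{real_normed_algebra_1, banach, ordered_real_vector, lattice} set" where
  "ideal_e = {x. \<exists>c::real. c \<ge> 0 \<and> lat_abs x \<le> c *\<^sub>R 1}"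

end

theory Submission imports Defs begin

text \<open>Positive elements of the ideal A_e generated by the identity behave like functions:
  disjoint ones multiply to zero, so A_e has no nonzero positive w with w^2 = 0 (split
  w - \<epsilon>e into its positive and negative parts). The band projection condition, evaluated
  at e, gives p^4 = p^2 \<le> e. If p \<in> A_e, splitting p - e into disjoint parts shows p \<le> e;
  then p - p^2 \<ge> 0 squares to zero, so p^2 = p. For an order idempotent p the inverse of
  \<lambda>e + p is (e - p/(\<lambda> + 1))/\<lambda> \<ge> 0. Conversely, if b = (\<lambda>e + p)^-1 \<ge> 0 then \<lambda>b \<le> e
  and p = bp^2 + \<lambda>e - \<lambda>^2 b \<le> (1/\<lambda> + \<lambda>)e.\<close>

lemma lat_abs_of_nonneg:
  fixes x :: "'a::{ordered_ab_group_add, lattice}"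
  assumes "0 \<le> x"
  shows "lat_abs x = x"
proof -
  have "- x \<le> x" using assms by (meson neg_le_0_iff_le order_trans)
  then show ?thesis by (simp add: lat_abs_def sup.absorb1)
qed

lemma lat_abs_nonneg:
  fixes x :: "'a::{ordered_real_vector, lattice}"
  shows "0 \<le> lat_abs x"
proof -
  have "x + - x \<le> lat_abs x + lat_abs x"
    unfolding lat_abs_def by (intro add_mono) simp_all
  then have "0 \<le> (1/2::real) *\<^sub>R (lat_abs x + lat_abs x)"
    by (intro scaleR_nonneg_nonneg) simp_all
  then show ?thesis by (simp add: scaleR_2[symmetric] del: scaleR_2)
qed

lemma sup_add_distrib_right:
  fixes x :: "'a::{ordered_ab_group_add, lattice}"
  shows "sup x y + c = sup (x + c) (y + c)"
proof (rule antisym)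
  have "sup x y \<le> sup (x + c) (y + c) - c"
    by (rule le_supI) (simp_all add: le_diff_eq)
  then show "sup x y + c \<le> sup (x + c) (y + c)" by (simp add: le_diff_eq)
  show "sup (x + c) (y + c) \<le> sup x y + c"
    by (rule le_supI) (simp_all add: add_right_mono)
qed

lemma pos_part_diff_neg_part:
  fixes z :: "'a::{ordered_ab_group_add, lattice}"
  shows "sup z 0 - sup (- z) 0 = z"
  using sup_add_distrib_right[of "- z" 0 z] by (simp add: sup_commute diff_eq_eq add.commute)

lemma inf_pos_part_neg_part:
  fixes z :: "'a::{ordered_ab_group_add, lattice}"
  shows "inf (sup z 0) (sup (- z) 0) \<le> 0"
proof -
  define m where "m = inf (sup z 0) (sup (- z) 0)"
  have "m \<le> sup z 0 - z"
    using pos_part_diff_neg_part[of z] unfolding m_def by (simp add: algebra_simps)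
  then have "z \<le> sup z 0 - m" by (simp add: algebra_simps)
  moreover have "0 \<le> sup z 0 - m" unfolding m_def by simp
  ultimately have "sup z 0 \<le> sup z 0 - m" by simp
  then show ?thesis unfolding m_def by (simp add: le_diff_eq)
qed

lemma nonneg_mem_ideal_e_iff:
  fixes x :: "'a::{real_normed_algebra_1, banach, ordered_real_vector, lattice}"
  assumes "0 \<le> x"
  shows "x \<in> ideal_e \<longleftrightarrow> (\<exists>c\<ge>0. x \<le> c *\<^sub>R 1)"
  using lat_abs_of_nonneg[OF assms] unfolding ideal_e_def by auto

lemma ideal_e_downward_closed:
  fixes x :: "'a::{real_normed_algebra_1, banach, ordered_real_vector, lattice}"
  assumes "0 \<le> x" "x \<le> y" "y \<in> ideal_e"
  shows "x \<in> ideal_e"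
  using assms nonneg_mem_ideal_e_iff[of x] nonneg_mem_ideal_e_iff[of y] order_trans by blast

lemma BP_nonneg: "p \<in> BP \<Longrightarrow> 0 \<le> p"
  unfolding BP_def by simp

lemma BP_square_idempotent:
  assumes "p \<in> BP"
  shows "p * p * (p * p) = p * p"
proof -
  have "(\<lambda>x. p * x * p) \<circ> (\<lambda>x. p * x * p) = (\<lambda>x. p * x * p)"
    using assms unfolding BP_def band_projection_def by simp
  from fun_cong[OF this, of 1] show ?thesis by (simp add: mult.assoc)
qed

lemma OI_iff_idempotent:
  assumes "0 \<le> p" "p * p \<le> 1"
  shows "p \<in> OI \<longleftrightarrow> p * p = p"
  using assms unfolding OI_def by auto

context
  assumes BLA:
    "banach_lattice_algebra TYPE('a::{real_normed_algebra_1, banach, ordered_real_vector, lattice})"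
begin

lemma bla_norm_mono:
  fixes x :: 'a
  assumes "0 \<le> x" "x \<le> y"
  shows "norm x \<le> norm y"
  using BLA assms lat_abs_of_nonneg[of x] lat_abs_of_nonneg[of y]
  unfolding banach_lattice_algebra_def by auto

lemma bla_mult_nonneg_nonneg:
  fixes x :: 'a
  assumes "0 \<le> x" "0 \<le> y"
  shows "0 \<le> x * y"
  using BLA assms unfolding banach_lattice_algebra_def by blast

lemma bla_mult_left_mono:
  fixes x :: 'a
  assumes "x \<le> y" "0 \<le> z"
  shows "z * x \<le> z * y"
  using bla_mult_nonneg_nonneg[of z "y - x"] assms by (simp add: right_diff_distrib)

lemma bla_mult_right_mono:
  fixes x :: 'a
  assumes "x \<le> y" "0 \<le> z"
  shows "x * z \<le> y * z"
  using bla_mult_nonneg_nonneg[of "y - x" z] assms by (simp add: left_diff_distrib)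

lemma bla_bernoulli:
  fixes b :: 'a
  assumes b: "0 \<le> b" and "0 \<le> 1 + b"
  shows "1 + of_nat n *\<^sub>R b \<le> (1 + b) ^ n"
proof (induction n)
  case 0
  then show ?case by simp
next
  case (Suc n)
  have "1 + of_nat (Suc n) *\<^sub>R b \<le> (1 + b) * (1 + of_nat n *\<^sub>R b)"
    using bla_mult_nonneg_nonneg[OF b b] b
    by (simp add: algebra_simps scaleR_nonneg_nonneg)
  also have "\<dots> \<le> (1 + b) * (1 + b) ^ n"
    using Suc.IH assms(2) by (rule bla_mult_left_mono)
  finally show ?case by simp
qed

text \<open>The positive part a of e satisfies norm a \<le> 1 and a = e + b with b the negative part,
  so the powers of a grow at least linearly in b while staying bounded in norm.\<close>
lemma bla_zero_le_one: "0 \<le> (1::'a)"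
proof -
  define b :: 'a where "b = sup (- 1) 0"
  have b0: "0 \<le> b" unfolding b_def by simp
  have a: "sup 1 0 = 1 + b"
    using pos_part_diff_neg_part[of "1::'a"] unfolding b_def by (simp add: algebra_simps)
  have "norm (sup (1::'a) 0) \<le> norm (lat_abs (1::'a))"
    using lat_abs_nonneg[of "1::'a"] by (intro bla_norm_mono) (auto simp: lat_abs_def)
  also have "\<dots> \<le> norm (1::'a)"
    using BLA lat_abs_of_nonneg[OF lat_abs_nonneg[of "1::'a"]]
    unfolding banach_lattice_algebra_def by (metis order_refl)
  finally have norm_a: "norm (1 + b) \<le> 1" using a by simp
  have bound: "of_nat n * norm b \<le> 2" for n
  proof -
    have "1 + of_nat n *\<^sub>R b \<le> (1 + b) ^ n"
      using b0 a by (intro bla_bernoulli) (auto simp flip: a)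
    then have "norm (of_nat n *\<^sub>R b) \<le> norm ((1 + b) ^ n - 1)"
      using b0 by (intro bla_norm_mono) (simp_all add: algebra_simps scaleR_nonneg_nonneg)
    also have "\<dots> \<le> norm (1 + b) ^ n + 1"
      using norm_triangle_ineq4[of "(1 + b) ^ n" 1] norm_power_ineq[of "1 + b" n] by simp
    also have "\<dots> \<le> 2" using norm_a by (simp add: power_le_one)
    finally show ?thesis by simp
  qed
  have "b = 0"
  proof (rule ccontr)
    assume "b \<noteq> 0"
    then obtain n where "2 < of_nat n * norm b" using ex_less_of_nat_mult[of "norm b"] by auto
    then show False using bound[of n] by simp
  qed
  then show ?thesis using a by (metis add_0_right sup.cobounded2)
qed

lemma scaleR_one_mem_ideal_e:
  assumes "0 \<le> c"
  shows "c *\<^sub>R (1::'a) \<in> ideal_e"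
  using assms bla_zero_le_one
  by (subst nonneg_mem_ideal_e_iff) (auto simp: scaleR_nonneg_nonneg)

lemma one_mem_ideal_e: "(1::'a) \<in> ideal_e"
  using scaleR_one_mem_ideal_e[of 1] by simp

lemma mult_eq_0_if_disjoint:
  fixes x :: 'a
  assumes x: "0 \<le> x" "x \<in> ideal_e" and y: "0 \<le> y" "y \<in> ideal_e"
    and disjoint: "inf x y \<le> 0"
  shows "x * y = 0"
proof -
  obtain c d where "0 \<le> c" "x \<le> c *\<^sub>R 1" "0 \<le> d" "y \<le> d *\<^sub>R 1"
    using x y nonneg_mem_ideal_e_iff by metis
  moreover define l where "l = c + d + 1"
  ultimately have l: "0 < l" and "x \<le> l *\<^sub>R 1" "y \<le> l *\<^sub>R 1"
    using bla_zero_le_one scaleR_right_mono[of c l "1::'a"] scaleR_right_mono[of d l "1::'a"]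
    by (auto intro: order_trans)
  then have "x * y \<le> l *\<^sub>R x" "x * y \<le> l *\<^sub>R y"
    using bla_mult_left_mono[of y "l *\<^sub>R 1" x] bla_mult_right_mono[of x "l *\<^sub>R 1" y] x y
    by simp_all
  then have "x * y /\<^sub>R l \<le> x" "x * y /\<^sub>R l \<le> y"
    using l by (simp_all add: pos_divideR_le_eq)
  then have "x * y /\<^sub>R l \<le> 0" using disjoint by (meson le_inf_iff order_trans)
  moreover have "0 \<le> x * y /\<^sub>R l"
    using bla_mult_nonneg_nonneg[OF x(1) y(1)] l by (simp add: scaleR_nonneg_nonneg)
  ultimately have "x * y /\<^sub>R l = 0" by (rule antisym)
  then show ?thesis using l by simp
qed

text \<open>Write w = a - b + \<epsilon>e with a, b the positive and negative parts of w - \<epsilon>e. Then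
  a * b = 0 gives a w = a^2 + \<epsilon>a, while a \<le> w gives a w \<le> w^2 = 0; hence a = 0 and
  w \<le> \<epsilon>e for every \<epsilon> > 0.\<close>
lemma eq_0_if_mult_self_eq_0:
  fixes w :: 'a
  assumes w: "0 \<le> w" "w \<in> ideal_e" and ww: "w * w = 0"
  shows "w = 0"
proof -
  have "norm w \<le> 0 + \<epsilon>" if \<epsilon>: "0 < \<epsilon>" for \<epsilon>
  proof -
    define a where "a = sup (w - \<epsilon> *\<^sub>R 1) 0"
    define b where "b = sup (- (w - \<epsilon> *\<^sub>R 1)) 0"
    have a0: "0 \<le> a" and b0: "0 \<le> b" unfolding a_def b_def by simp_all
    have \<epsilon>1: "0 \<le> \<epsilon> *\<^sub>R (1::'a)"
      using \<epsilon> bla_zero_le_one by (simp add: scaleR_nonneg_nonneg)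
    have aw: "a \<le> w" unfolding a_def using \<epsilon>1 w(1) by (simp add: diff_le_eq)
    have b\<epsilon>: "b \<le> \<epsilon> *\<^sub>R 1" unfolding b_def using \<epsilon>1 w(1) by simp
    have ab: "a * b = 0"
      using ideal_e_downward_closed[OF a0 aw w(2)]
        ideal_e_downward_closed[OF b0 b\<epsilon> scaleR_one_mem_ideal_e] \<epsilon>
      unfolding a_def b_def
      by (intro mult_eq_0_if_disjoint inf_pos_part_neg_part) simp_all
    have w_eq: "w = a - b + \<epsilon> *\<^sub>R 1"
      using pos_part_diff_neg_part[of "w - \<epsilon> *\<^sub>R 1"] unfolding a_def b_def by simp
    have "\<epsilon> *\<^sub>R a \<le> a * a + \<epsilon> *\<^sub>R a"
      using add_increasing[OF bla_mult_nonneg_nonneg[OF a0 a0] order_refl] .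
    also have "\<dots> = a * w"
      using ab by (subst w_eq) (simp add: algebra_simps)
    also have "\<dots> \<le> w * w" using aw w(1) by (rule bla_mult_right_mono)
    finally have "\<epsilon> *\<^sub>R a \<le> 0" using ww by simp
    moreover have "0 \<le> \<epsilon> *\<^sub>R a" using \<epsilon> a0 by (simp add: scaleR_nonneg_nonneg)
    ultimately have "a = 0" using \<epsilon> by (metis antisym scaleR_eq_0_iff less_irrefl)
    then have "w \<le> \<epsilon> *\<^sub>R 1" unfolding a_def by (metis sup.cobounded1 diff_le_0_iff_le)
    then have "norm w \<le> norm (\<epsilon> *\<^sub>R (1::'a))" by (rule bla_norm_mono[OF w(1)])
    then show ?thesis using \<epsilon> by simp
  qed
  then have "norm w \<le> 0" by (rule field_le_epsilon)
  then show ?thesis by simp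
qed

lemma le_one_if_mult_self_le_one:
  fixes p :: 'a
  assumes p: "0 \<le> p" "p \<in> ideal_e" and pp: "p * p \<le> 1"
  shows "p \<le> 1"
proof -
  define a where "a = sup (p - 1) 0"
  define b where "b = sup (- (p - 1)) 0"
  have a0: "0 \<le> a" and b0: "0 \<le> b" unfolding a_def b_def by simp_all
  have ap: "a \<le> p" unfolding a_def using bla_zero_le_one p(1) by (simp add: diff_le_eq)
  have b1: "b \<le> 1" unfolding b_def using bla_zero_le_one p(1) by simp
  have ideal: "a \<in> ideal_e" "b \<in> ideal_e"
    using ideal_e_downward_closed[OF a0 ap p(2)]
      ideal_e_downward_closed[OF b0 b1 one_mem_ideal_e] by simp_all
  have ab: "a * b = 0" and ba: "b * a = 0"
    using inf_pos_part_neg_part[of "p - 1"] a0 b0 ideal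
    by (auto intro!: mult_eq_0_if_disjoint simp: a_def b_def inf_commute)
  have abb: "a * (b * b) = 0" by (simp add: mult.assoc[symmetric] ab)
  have p_eq: "p = 1 + (a - b)"
    using pos_part_diff_neg_part[of "p - 1"] unfolding a_def b_def by simp
  have "a * a + (a * a + a * (a * a)) = a * (p * p - 1)"
    by (simp add: p_eq algebra_simps ab ba abb)
  also have "\<dots> \<le> 0"
    using bla_mult_left_mono[of "p * p - 1" 0 a] pp a0 by simp
  finally have "a * a + (a * a + a * (a * a)) \<le> 0" .
  moreover have "0 \<le> a * a" "0 \<le> a * (a * a)"
    using a0 by (simp_all add: bla_mult_nonneg_nonneg)
  ultimately have "a * a = 0" by (metis add_nonneg_eq_0_iff add_nonneg_nonneg order.antisym)
  then have "a = 0" using a0 ideal(1) eq_0_if_mult_self_eq_0 by blast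
  then show ?thesis unfolding a_def by (metis sup.cobounded1 diff_le_0_iff_le)
qed

text \<open>Since p \<le> e, the powers decrease: p^4 \<le> p^3 \<le> p^2 \<le> p, so p^3 = p^2 and
  (p - p^2)^2 = p^2 - 2p^3 + p^4 = 0.\<close>
lemma idempotent_if_square_idempotent:
  fixes p :: 'a
  assumes p0: "0 \<le> p" and p1: "p \<le> 1" and p4: "p * p * (p * p) = p * p"
  shows "p * p = p"
proof -
  have pp0: "0 \<le> p * p" by (rule bla_mult_nonneg_nonneg[OF p0 p0])
  have ppp0: "0 \<le> p * p * p" by (rule bla_mult_nonneg_nonneg[OF pp0 p0])
  have "p * p \<le> p" using bla_mult_left_mono[OF p1 p0] by simp
  have "p * p * p \<le> p * p" using bla_mult_left_mono[OF p1 pp0] by simp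
  moreover have "p * p * p * p \<le> p * p * p" using bla_mult_left_mono[OF p1 ppp0] by simp
  ultimately have p3: "p * p * p = p * p" using p4 by (simp add: mult.assoc)
  define w where "w = p - p * p"
  have w0: "0 \<le> w" unfolding w_def using \<open>p * p \<le> p\<close> by simp
  have "w \<le> 1" unfolding w_def using order_trans[of "p - p * p" p 1] pp0 p1 by simp
  then have "w \<in> ideal_e"
    using ideal_e_downward_closed[OF w0 _ one_mem_ideal_e] by simp
  moreover have "w * w = 0" unfolding w_def using p3 p4 by (simp add: algebra_simps)
  ultimately have "w = 0" using w0 eq_0_if_mult_self_eq_0 by blast
  then show ?thesis unfolding w_def by simp
qed

lemma BP_square_le_one:
  assumes "p \<in> BP"
  shows "p * p \<le> (1::'a)"
proof -
  have "p * 1 * p \<le> 1"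
    using assms bla_zero_le_one unfolding BP_def band_projection_def by blast
  then show ?thesis by simp
qed

lemma OI_subset_ideal_e: "OI \<subseteq> (ideal_e :: 'a set)"
  using ideal_e_downward_closed one_mem_ideal_e unfolding OI_def by blast

lemma OI_shift_has_nonneg_inverse:
  fixes p :: 'a
  assumes p: "p \<in> OI" and t: "0 < t"
  shows "\<exists>b. b * (t *\<^sub>R 1 + p) = 1 \<and> (t *\<^sub>R 1 + p) * b = 1 \<and> 0 \<le> b"
proof -
  define s where "s = 1 / (t + 1)"
  have s: "0 \<le> s" "s \<le> 1" "s * (t + 1) = 1" unfolding s_def using t by simp_all
  define b where "b = (1 - s *\<^sub>R p) /\<^sub>R t"
  have pp: "p * p = p" and p1: "p \<le> 1" using p unfolding OI_def by simp_all
  have "(1 - s *\<^sub>R p) * (t *\<^sub>R 1 + p) = t *\<^sub>R 1 + (1 - s * (t + 1)) *\<^sub>R p"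
    "(t *\<^sub>R 1 + p) * (1 - s *\<^sub>R p) = t *\<^sub>R 1 + (1 - s * (t + 1)) *\<^sub>R p"
    using pp by (simp_all add: algebra_simps)
  then have "b * (t *\<^sub>R 1 + p) = 1" "(t *\<^sub>R 1 + p) * b = 1"
    unfolding b_def using s(3) t by simp_all
  moreover have "s *\<^sub>R p \<le> 1"
    using scaleR_left_mono[OF p1 s(1)] scaleR_right_mono[OF s(2) bla_zero_le_one] by simp
  then have "0 \<le> b" unfolding b_def using t by (simp add: scaleR_nonneg_nonneg)
  ultimately show ?thesis by blast
qed

lemma mem_ideal_e_if_shift_has_nonneg_inverse:
  fixes p :: 'a
  assumes p0: "0 \<le> p" and pp: "p * p \<le> 1" and t: "0 < t"
    and inv: "b * (t *\<^sub>R 1 + p) = 1" and b0: "0 \<le> b"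
  shows "p \<in> ideal_e"
proof -
  have bp: "b * p = 1 - t *\<^sub>R b" using inv by (simp add: algebra_simps eq_diff_eq)
  have "t *\<^sub>R b \<le> 1" using bp bla_mult_nonneg_nonneg[OF b0 p0] by simp
  then have b_le: "b \<le> 1 /\<^sub>R t" by (subst pos_le_divideR_eq[OF t])
  have "b * (p * p) = (1 - t *\<^sub>R b) * p" using bp by (simp add: mult.assoc[symmetric])
  also have "\<dots> = p - t *\<^sub>R (b * p)" by (simp add: algebra_simps)
  also have "\<dots> = p - t *\<^sub>R 1 + (t * t) *\<^sub>R b" by (subst bp) (simp add: algebra_simps)
  finally have "p = b * (p * p) + t *\<^sub>R 1 - (t * t) *\<^sub>R b" by (simp add: algebra_simps)
  also have "\<dots> \<le> b * (p * p) + t *\<^sub>R 1"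
    using b0 by (simp add: scaleR_nonneg_nonneg)
  also have "\<dots> \<le> b + t *\<^sub>R 1" using bla_mult_left_mono[OF pp b0] by simp
  also have "\<dots> \<le> (inverse t + t) *\<^sub>R 1" using b_le by (simp add: scaleR_add_left)
  finally show ?thesis
    unfolding nonneg_mem_ideal_e_iff[OF p0] using t by (intro exI[of _ "inverse t + t"]) simp
qed

end

theorem mainTheorem4:
  fixes p :: "'a::{real_normed_algebra_1, banach, ordered_real_vector, lattice}"
  assumes "banach_lattice_algebra TYPE('a)"
    and "p \<in> BP"
  shows "(p \<in> OI \<longleftrightarrow> p * p = p)
       \<and> (p * p = p \<longleftrightarrow> p \<in> ideal_e)
       \<and> (p \<in> ideal_e \<longleftrightarrow>
            (\<exists>t::real. t > norm p \<and>
               (\<exists>b. b * (t *\<^sub>R 1 + p) = 1 \<and> (t *\<^sub>R 1 + p) * b = 1 \<and> 0 \<le> b)))"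
proof -
  note BLA = assms(1)
  have p0: "0 \<le> p" and pp: "p * p \<le> 1" and p4: "p * p * (p * p) = p * p"
    using assms BP_nonneg BP_square_le_one BP_square_idempotent by blast+
  have OI: "p \<in> OI \<longleftrightarrow> p * p = p" using OI_iff_idempotent[OF p0 pp] .
  have ideal: "p * p = p \<longleftrightarrow> p \<in> ideal_e"
    using OI OI_subset_ideal_e[OF BLA] le_one_if_mult_self_le_one[OF BLA p0 _ pp]
      idempotent_if_square_idempotent[OF BLA p0 _ p4] by blast
  have "\<exists>b. b * ((norm p + 1) *\<^sub>R 1 + p) = 1 \<and> ((norm p + 1) *\<^sub>R 1 + p) * b = 1 \<and> 0 \<le> b"
    if "p \<in> ideal_e"
    using OI ideal that OI_shift_has_nonneg_inverse[OF BLA, of p "norm p + 1"]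
    by (simp add: add_nonneg_pos)
  moreover have "p \<in> ideal_e" if "t > norm p" "b * (t *\<^sub>R 1 + p) = 1" "0 \<le> b" for t b
    using mem_ideal_e_if_shift_has_nonneg_inverse[OF BLA p0 pp _ that(2,3)] that(1)
      norm_ge_zero[of p] by linarith
  ultimately show ?thesis using OI ideal by (metis less_add_one)
qed

end
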